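(* Let $n\ge1$ be an integer and $V(x)=\frac{1}{2n}x^{2n}+\sum_{k=1}^{2n-1}\frac{a_k}{k}x^k$ with real coefficients $a_k$. Let $(\mu_t)_{t\ge0}$ be a family of probability measures on $\mathbb{R}$ solving, for all $f\in C_0^\infty(\mathbb{R})$, \[\frac{d}{dt}\int f\,d\mu_t=\frac12\iint\frac{f'(x)-f'(y)}{x-y}\mu_t(dx)\mu_t(dy)-\int V'(x)f'(x)\mu_t(dx).\] Assume that $\mu_t$ has finite moments up to order $2n+p-2$ for some $p\ge2$ and all $t\ge0$. Then there exists $M_p>0$ such that $m_p(t):=\int_{\mathbb{R}}|x|^p\mu_t(dx)\le M_p$ for all $t\ge0$. *)

theory Defs
  imports "HOL-Probability.Probability"
begin

definition V :: "nat \<Rightarrow> (nat \<Rightarrow> real) \<Rightarrow> real \<Rightarrow> real" where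
  "V n a x = x ^ (2*n) / real (2*n) + (\<Sum>k=1..2*n-1. a k / real k * x ^ k)"

definition smooth_compact :: "(real \<Rightarrow> real) \<Rightarrow> bool" where
  "smooth_compact f \<longleftrightarrow>
     (\<forall>k. \<forall>x. ((deriv ^^ k) f) differentiable (at x)) \<and>
     compact (closure {x. f x \<noteq> 0})"

text \<open>The kernel (f'(x)-f'(y))/(x-y), extended continuously on the diagonal by f''(x).\<close>
definition dq_kernel :: "(real \<Rightarrow> real) \<Rightarrow> real \<Rightarrow> real \<Rightarrow> real" where
  "dq_kernel f x y = (if x = y then deriv (deriv f) x
                      else (deriv f x - deriv f y) / (x - y))"

end

theory Submission
  imports Defs
begin

text \<open>
  Write G(t) for the integral of weight r x = (1 + x^2) powr r against \<mu> t, and suppose the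
  integrals of weight (r - 1) are bounded in time. Test the equation with
  f(x) = (weight r x - weight r (2L)) \<chi>(x/L), where \<chi> is a smooth plateau.
  Uniformly in L, |f''| \<le> C weight (r - 1), so by the mean value theorem the interaction term
  is bounded by the integral of weight (r - 1). Since x V'(x) \<ge> (1 + x^2)/4 - C and the part of
  f' coming from \<chi>' has the sign of x, the drift term is at least r/2 times the integral of
  weight r x \<chi>(x/L), minus a multiple of the integral of weight (r - 1). Integrating in time
  and letting L \<rightarrow> \<infinity> gives G(t) \<le> K G(s) + A (t - s) and r/2 \<integral> G over [s, t] \<le> K G(s) + A (t - s);
  so on every long enough time window G falls below half its initial value plus a constant, and
  G stays bounded. Raising r in unit steps from weight 0 = 1 reaches r = p/2, and
  |x|^p \<le> weight (p/2) x.
\<close>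

section \<open>Smooth functions on the real line\<close>

definition smooth :: "(real \<Rightarrow> real) \<Rightarrow> bool" where
  "smooth f \<longleftrightarrow> (\<forall>k x. ((deriv ^^ k) f) differentiable (at x))"

text \<open>Finite orders turn closure of smoothness under products and composition into an induction.\<close>

fun times_differentiable :: "nat \<Rightarrow> (real \<Rightarrow> real) \<Rightarrow> bool" where
  "times_differentiable 0 f \<longleftrightarrow> True"
| "times_differentiable (Suc k) f \<longleftrightarrow>
     (\<forall>x. f differentiable (at x)) \<and> times_differentiable k (deriv f)"

lemma times_differentiable_iff:
  "times_differentiable k f \<longleftrightarrow> (\<forall>j<k. \<forall>x. ((deriv ^^ j) f) differentiable (at x))"
proof (induction k arbitrary: f)
  case (Suc k)
  then show ?case
    by (auto simp: less_Suc_eq_0_disj funpow_Suc_right simp del: funpow.simps)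
qed simp

lemma smooth_iff_times_differentiable: "smooth f \<longleftrightarrow> (\<forall>k. times_differentiable k f)"
  unfolding smooth_def times_differentiable_iff by (meson lessI)

lemma times_differentiable_Suc_imp:
  "times_differentiable (Suc k) f \<Longrightarrow> times_differentiable k f"
  by (auto simp: times_differentiable_iff)

lemma deriv_eqI: "(\<And>x. (f has_real_derivative f' x) (at x)) \<Longrightarrow> deriv f = f'"
  using DERIV_imp_deriv by blast

lemma smooth_differentiable: "smooth f \<Longrightarrow> f differentiable (at x)"
  unfolding smooth_def by (metis funpow_0)

lemma smooth_deriv: "smooth f \<Longrightarrow> smooth (deriv f)"
  unfolding smooth_def by (metis funpow_Suc_right comp_apply)

lemma smooth_has_real_derivative: "smooth f \<Longrightarrow> (f has_real_derivative deriv f x) (at x)"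
  using smooth_differentiable DERIV_deriv_iff_real_differentiable by blast

lemma smooth_continuous_on: "smooth f \<Longrightarrow> continuous_on S f"
  by (meson continuous_at_imp_continuous_on differentiable_imp_continuous_within smooth_differentiable)

lemma smooth_coinduct:
  assumes "P f"
    and step: "\<And>h. P h \<Longrightarrow> \<exists>h'. P h' \<and> (\<forall>x. (h has_real_derivative h' x) (at x))"
  shows "smooth f"
proof -
  have "P ((deriv ^^ k) f) \<and> (\<forall>x. ((deriv ^^ k) f) differentiable (at x))" for k
  proof (induction k)
    case 0
    then show ?case using assms(1) step[OF assms(1)] real_differentiable_def by auto
  next
    case (Suc k)
    then obtain h' where "P h'" "\<And>x. ((deriv ^^ k) f has_real_derivative h' x) (at x)"
      using step by blast
    moreover from this have "(deriv ^^ Suc k) f = h'" by (simp add: deriv_eqI)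
    ultimately show ?case using step real_differentiable_def by metis
  qed
  then show ?thesis unfolding smooth_def by blast
qed

lemma times_differentiable_add:
  "times_differentiable k f \<Longrightarrow> times_differentiable k g \<Longrightarrow>
   times_differentiable k (\<lambda>x. f x + g x)"
proof (induction k arbitrary: f g)
  case (Suc k)
  then have "deriv (\<lambda>x. f x + g x) = (\<lambda>x. deriv f x + deriv g x)"
    by (intro deriv_eqI DERIV_add) (auto simp: DERIV_deriv_iff_real_differentiable)
  with Suc show ?case by auto
qed simp

lemma times_differentiable_mult:
  "times_differentiable k f \<Longrightarrow> times_differentiable k g \<Longrightarrow>
   times_differentiable k (\<lambda>x. f x * g x)"
proof (induction k arbitrary: f g)
  case (Suc k)
  have f: "times_differentiable k f" and g: "times_differentiable k g"
    using Suc.prems times_differentiable_Suc_imp by blast+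
  from Suc.prems have "deriv (\<lambda>x. f x * g x) = (\<lambda>x. deriv f x * g x + deriv g x * f x)"
    by (intro deriv_eqI DERIV_mult) (auto simp: DERIV_deriv_iff_real_differentiable)
  moreover have "times_differentiable k (\<lambda>x. deriv f x * g x + deriv g x * f x)"
    using Suc.prems f g by (intro times_differentiable_add Suc.IH) auto
  ultimately show ?case
    using Suc.prems by auto
qed simp

lemma times_differentiable_compose:
  "times_differentiable k f \<Longrightarrow> times_differentiable k g \<Longrightarrow>
   times_differentiable k (\<lambda>x. f (g x))"
proof (induction k arbitrary: f)
  case (Suc k)
  have "times_differentiable k g"
    using Suc.prems times_differentiable_Suc_imp by blast
  then have IH: "times_differentiable k (\<lambda>x. deriv f (g x))"
    using Suc.prems by (auto intro: Suc.IH[of "deriv f"])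
  have d: "((\<lambda>x. f (g x)) has_real_derivative deriv f (g x) * deriv g x) (at x)" for x
    using Suc.prems by (intro DERIV_chain2) (auto simp: DERIV_deriv_iff_real_differentiable)
  then have "deriv (\<lambda>x. f (g x)) = (\<lambda>x. deriv f (g x) * deriv g x)"
    by (rule deriv_eqI)
  moreover have "times_differentiable k (\<lambda>x. deriv f (g x) * deriv g x)"
    using IH Suc.prems by (intro times_differentiable_mult) auto
  moreover have "(\<lambda>x. f (g x)) differentiable (at x)" for x
    using d real_differentiable_def by blast
  ultimately show ?case by simp
qed simp

lemma smooth_add: "smooth f \<Longrightarrow> smooth g \<Longrightarrow> smooth (\<lambda>x. f x + g x)"
  by (simp add: smooth_iff_times_differentiable times_differentiable_add)

lemma smooth_mult: "smooth f \<Longrightarrow> smooth g \<Longrightarrow> smooth (\<lambda>x. f x * g x)"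
  by (simp add: smooth_iff_times_differentiable times_differentiable_mult)

lemma smooth_compose: "smooth f \<Longrightarrow> smooth g \<Longrightarrow> smooth (\<lambda>x. f (g x))"
  by (simp add: smooth_iff_times_differentiable times_differentiable_compose)

lemma smooth_poly: "smooth (poly P)"
  by (rule smooth_coinduct[where P = "\<lambda>h. \<exists>P. h = poly P"]) (auto intro: poly_DERIV)

lemma smooth_const: "smooth (\<lambda>x. c)"
proof -
  have "poly [:c:] = (\<lambda>x. c)" by (simp add: fun_eq_iff)
  then show ?thesis using smooth_poly by metis
qed

lemma smooth_diff: "smooth f \<Longrightarrow> smooth g \<Longrightarrow> smooth (\<lambda>x. f x - g x)"
  using smooth_add[OF _ smooth_mult[OF smooth_const[of "-1"]], of f g] by simp

lemma smooth_scale: "smooth f \<Longrightarrow> smooth (\<lambda>x. f (x / L))"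
  using smooth_compose[OF _ smooth_poly[of "[:0, 1 / L:]"]] by simp

lemma smooth_poly_powr:
  assumes W: "\<And>x. 0 < poly W x"
  shows "smooth (\<lambda>x. poly W x powr s)"
proof (rule smooth_coinduct[where P = "\<lambda>h. \<exists>P s. h = (\<lambda>x. poly P x * poly W x powr s)"])
  fix h assume "\<exists>P s. h = (\<lambda>x. poly P x * poly W x powr s)"
  then obtain P s where h: "h = (\<lambda>x. poly P x * poly W x powr s)" by blast
  define Q where "Q = pderiv P * W + smult s (P * pderiv W)"
  have "(h has_real_derivative poly Q x * poly W x powr (s - 1)) (at x)" for x
  proof -
    have "(h has_real_derivative
        poly (pderiv P) x * poly W x powr s + poly P x * (s * poly W x powr (s - 1) * poly (pderiv W) x))
        (at x)"
      unfolding h using W by (auto intro!: derivative_eq_intros DERIV_fun_powr poly_DERIV)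
    moreover have "poly W x powr s = poly W x * poly W x powr (s - 1)"
      using W[of x] powr_add[of "poly W x" 1 "s - 1"] by simp
    ultimately show ?thesis by (simp add: Q_def algebra_simps)
  qed
  then show "\<exists>h'. (\<exists>P s. h' = (\<lambda>x. poly P x * poly W x powr s)) \<and>
      (\<forall>x. (h has_real_derivative h' x) (at x))"
    by blast
qed (intro exI[of _ 1] exI[of _ s], simp)

lemma deriv_mult_scaled:
  assumes "smooth u" and "smooth v"
  shows "deriv (\<lambda>x. u x * v (x / L)) = (\<lambda>x. deriv u x * v (x / L) + u x * deriv v (x / L) / L)"
proof (rule deriv_eqI)
  fix x
  have "((\<lambda>x. u x * v (x / L)) has_real_derivative
      deriv u x * v (x / L) + deriv v (x / L) * (1 / L) * u x) (at x)"
    by (intro DERIV_mult DERIV_chain2[of v] smooth_has_real_derivative assms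
        DERIV_cdivide[OF DERIV_ident, simplified])
  then show "((\<lambda>x. u x * v (x / L)) has_real_derivative
      deriv u x * v (x / L) + u x * deriv v (x / L) / L) (at x)"
    by (simp add: algebra_simps)
qed

lemma deriv2_mult_scaled:
  assumes u: "smooth u" and v: "smooth v" and L: "L \<noteq> 0"
  shows "deriv (deriv (\<lambda>x. u x * v (x / L))) x =
    deriv (deriv u) x * v (x / L) + 2 * deriv u x * deriv v (x / L) / L
    + u x * deriv (deriv v) (x / L) / L\<^sup>2"
proof -
  have scaled: "((\<lambda>x. w (x / L)) has_real_derivative deriv w (x / L) * (1 / L)) (at x)"
    if "smooth w" for w
    by (rule DERIV_chain2[OF smooth_has_real_derivative[OF that] DERIV_cdivide[OF DERIV_ident]])
  have "((\<lambda>x. deriv u x * v (x / L) + u x * deriv v (x / L) / L) has_real_derivative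
      (deriv u x * (deriv v (x / L) * (1 / L)) + deriv (deriv u) x * v (x / L))
      + (u x * (deriv (deriv v) (x / L) * (1 / L)) + deriv u x * deriv v (x / L)) / L) (at x)"
    using u v
    by (intro DERIV_add DERIV_mult' DERIV_cdivide scaled smooth_has_real_derivative smooth_deriv)
  then show ?thesis
    unfolding deriv_mult_scaled[OF u v]
    using L by (subst DERIV_imp_deriv) (auto simp: field_simps power2_eq_square)
qed

lemma dq_kernel_le:
  assumes f: "smooth f"
    and B: "\<And>z. min x y \<le> z \<Longrightarrow> z \<le> max x y \<Longrightarrow> deriv (deriv f) z \<le> B"
  shows "dq_kernel f x y \<le> B"
proof (cases "x = y")
  case True
  then show ?thesis using B[of x] by (simp add: dq_kernel_def)
next
  case False
  define a b where "a = min x y" and "b = max x y"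
  have "a < b" using False by (simp add: a_def b_def)
  then obtain z where z: "a < z" "z < b" "deriv f b - deriv f a = (b - a) * deriv (deriv f) z"
    using MVT2[of a b "deriv f" "deriv (deriv f)"] smooth_has_real_derivative[OF smooth_deriv[OF f]]
    by blast
  have "dq_kernel f x y = (deriv f b - deriv f a) / (b - a)"
    using False by (cases "x < y") (auto simp: dq_kernel_def a_def b_def divide_simps algebra_simps)
  also have "\<dots> = deriv (deriv f) z"
    using z \<open>a < b\<close> by simp
  also have "\<dots> \<le> B"
    using z by (intro B) (auto simp: a_def b_def)
  finally show ?thesis .
qed

lemma smooth_compact_if_vanishes:
  assumes "smooth f" and "\<And>x. R < \<bar>x\<bar> \<Longrightarrow> f x = 0"
  shows "smooth_compact f"
proof -
  have "{x. f x \<noteq> 0} \<subseteq> cball 0 R"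
    using assms(2) by (force simp: not_less)
  then have "compact (closure {x. f x \<noteq> 0})"
    using bounded_cball bounded_subset compact_closure by blast
  then show ?thesis
    using assms(1) unfolding smooth_compact_def smooth_def by blast
qed

lemma has_real_derivative_nonpos_if_antimono:
  assumes "(f has_real_derivative D) (at x)" and "\<And>y z. y \<le> z \<Longrightarrow> f z \<le> f y"
  shows "D \<le> 0"
proof (rule ccontr)
  assume "\<not> D \<le> 0"
  then obtain d where d: "0 < d" "\<And>h. 0 < h \<Longrightarrow> h < d \<Longrightarrow> f x < f (x + h)"
    using DERIV_pos_inc_right[OF assms(1)] by force
  then have "f x < f (x + d / 2)" by simp
  moreover have "f (x + d / 2) \<le> f x" using assms(2) d(1) by simp
  ultimately show False by simp
qed

lemma bounded_if_vanishes_outside: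
  fixes f :: "real \<Rightarrow> real"
  assumes "continuous_on UNIV f" and "\<And>x. R < \<bar>x\<bar> \<Longrightarrow> f x = 0"
  shows "\<exists>B. \<forall>x. \<bar>f x\<bar> \<le> B"
proof -
  have "compact (f ` {-R..R})"
    by (intro compact_continuous_image continuous_on_subset[OF assms(1)]) auto
  then obtain B where B: "\<And>x. x \<in> {-R..R} \<Longrightarrow> \<bar>f x\<bar> \<le> B"
    by (metis compact_imp_bounded bounded_real image_eqI)
  have "\<bar>f x\<bar> \<le> max B 0" for x
  proof (cases "R < \<bar>x\<bar>")
    case False
    then have "-R \<le> x" "x \<le> R" by linarith+
    then have "\<bar>f x\<bar> \<le> B" using B[of x] by simp
    then show ?thesis by (simp add: le_max_iff_disj)
  qed (simp add: assms(2))
  then show ?thesis by blast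
qed

section \<open>A smooth cutoff\<close>

definition exp_neg_inv :: "real \<Rightarrow> real" where
  "exp_neg_inv y = (if 0 < y then exp (- (1 / y)) else 0)"

lemma poly_times_exp_neg_tendsto_0: "((\<lambda>u. poly P u * exp (- u)) \<longlongrightarrow> (0::real)) at_top"
proof -
  have "((\<lambda>u. \<Sum>i\<le>degree P. coeff P i * (u ^ i / exp u)) \<longlongrightarrow> (\<Sum>i\<le>degree P. coeff P i * 0)) at_top"
    by (intro tendsto_sum tendsto_mult tendsto_const tendsto_power_div_exp_0)
  then show ?thesis
    by (simp add: poly_altdef exp_minus field_simps sum_divide_distrib)
qed

definition poly_exp_neg_inv :: "real poly \<Rightarrow> real \<Rightarrow> real" where
  "poly_exp_neg_inv P y = (if 0 < y then poly P (1 / y) * exp (- (1 / y)) else 0)"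

lemma poly_exp_neg_inv_div_tendsto_0: "((\<lambda>y. poly_exp_neg_inv P y / y) \<longlongrightarrow> 0) (at 0)"
proof (rule filterlim_split_at)
  have "((\<lambda>y. poly (pCons 0 P) (1 / y) * exp (- (1 / y))) \<longlongrightarrow> 0) (at_right 0)"
    using filterlim_compose[OF poly_times_exp_neg_tendsto_0[of "pCons 0 P"] filterlim_inverse_at_top_right]
    by (simp add: o_def inverse_eq_divide del: poly_pCons)
  moreover have "\<forall>\<^sub>F y in at_right 0. poly (pCons 0 P) (1 / y) * exp (- (1 / y)) = poly_exp_neg_inv P y / y"
    by (auto simp: eventually_at_filter poly_exp_neg_inv_def intro!: always_eventually)
  ultimately show "((\<lambda>y. poly_exp_neg_inv P y / y) \<longlongrightarrow> 0) (at_right 0)"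
    by (rule Lim_transform_eventually)
  show "((\<lambda>y. poly_exp_neg_inv P y / y) \<longlongrightarrow> 0) (at_left 0)"
    by (rule Lim_transform_eventually[OF tendsto_const])
       (auto simp: eventually_at_filter poly_exp_neg_inv_def intro!: always_eventually)
qed

lemma has_real_derivative_poly_exp_neg_inv:
  "(poly_exp_neg_inv P has_real_derivative poly_exp_neg_inv ([:0, 0, 1:] * (P - pderiv P)) y) (at y)"
proof (cases y "0 :: real" rule: linorder_cases)
  case less
  show ?thesis
    by (rule has_field_derivative_transform_within_open[where f = "\<lambda>_. 0" and S = "{..<0}"])
       (use less in \<open>auto simp: poly_exp_neg_inv_def\<close>)
next
  case equal
  then show ?thesis
    using poly_exp_neg_inv_div_tendsto_0[of P]
    by (simp add: has_field_derivative_iff poly_exp_neg_inv_def)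
next
  case greater
  have "((\<lambda>y. poly P (1 / y) * exp (- (1 / y))) has_real_derivative
      poly (pderiv P) (1 / y) * (- 1 / y\<^sup>2) * exp (- (1 / y)) + poly P (1 / y) * (exp (- (1 / y)) * (1 / y\<^sup>2)))
      (at y)"
    using greater by (auto intro!: derivative_eq_intros simp: power2_eq_square)
  then have "((\<lambda>y. poly P (1 / y) * exp (- (1 / y))) has_real_derivative
      poly_exp_neg_inv ([:0, 0, 1:] * (P - pderiv P)) y) (at y)"
    using greater by (simp add: poly_exp_neg_inv_def algebra_simps power2_eq_square)
  then show ?thesis
    by (rule has_field_derivative_transform_within_open[of _ _ _ "{0<..}"])
       (use greater in \<open>auto simp: poly_exp_neg_inv_def\<close>)
qed

lemma smooth_exp_neg_inv: "smooth exp_neg_inv"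
proof -
  have "smooth (poly_exp_neg_inv 1)"
    using has_real_derivative_poly_exp_neg_inv
    by (intro smooth_coinduct[where P = "\<lambda>g. \<exists>P. g = poly_exp_neg_inv P"]) blast+
  moreover have "poly_exp_neg_inv 1 = exp_neg_inv"
    by (auto simp: poly_exp_neg_inv_def exp_neg_inv_def)
  ultimately show ?thesis by simp
qed

lemma exp_neg_inv_nonneg: "0 \<le> exp_neg_inv y"
  by (simp add: exp_neg_inv_def)

lemma exp_neg_inv_pos: "0 < y \<Longrightarrow> 0 < exp_neg_inv y"
  by (simp add: exp_neg_inv_def)

lemma exp_neg_inv_mono: "y \<le> z \<Longrightarrow> exp_neg_inv y \<le> exp_neg_inv z"
  by (auto simp: exp_neg_inv_def divide_simps)

definition cutoff_profile :: "real \<Rightarrow> real" where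
  "cutoff_profile s = exp 1 * exp_neg_inv (1 - exp_neg_inv (s - 1) / exp_neg_inv 3)"

definition cutoff :: "real \<Rightarrow> real" where
  "cutoff x = cutoff_profile (x\<^sup>2)"

lemma smooth_cutoff_profile: "smooth cutoff_profile"
proof -
  have "smooth (\<lambda>s. exp_neg_inv (poly [:-1, 1:] s))"
    by (rule smooth_compose[OF smooth_exp_neg_inv smooth_poly])
  then have "smooth (\<lambda>s. 1 - 1 / exp_neg_inv 3 * exp_neg_inv (s - 1))"
    by (intro smooth_diff smooth_const smooth_mult) simp_all
  then have "smooth (\<lambda>s. exp 1 * exp_neg_inv (1 - 1 / exp_neg_inv 3 * exp_neg_inv (s - 1)))"
    by (intro smooth_mult smooth_const smooth_compose[OF smooth_exp_neg_inv])
  then show ?thesis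
    unfolding cutoff_profile_def[abs_def] by simp
qed

lemma cutoff_profile_antimono:
  assumes "s \<le> s'"
  shows "cutoff_profile s' \<le> cutoff_profile s"
proof -
  have "exp_neg_inv (s - 1) / exp_neg_inv 3 \<le> exp_neg_inv (s' - 1) / exp_neg_inv 3"
    using assms exp_neg_inv_pos[of 3] by (intro divide_right_mono exp_neg_inv_mono) auto
  then show ?thesis
    unfolding cutoff_profile_def by (intro mult_left_mono exp_neg_inv_mono) auto
qed

lemma cutoff_profile_eq_1: "s \<le> 1 \<Longrightarrow> cutoff_profile s = 1"
  by (simp add: cutoff_profile_def exp_neg_inv_def exp_minus)

lemma cutoff_profile_eq_0:
  assumes "4 \<le> s"
  shows "cutoff_profile s = 0"
proof -
  have "exp_neg_inv 3 \<le> exp_neg_inv (s - 1)"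
    using assms by (intro exp_neg_inv_mono) simp
  then have "1 - exp_neg_inv (s - 1) / exp_neg_inv 3 \<le> 0"
    using exp_neg_inv_pos[of 3] by simp
  then show ?thesis
    by (simp add: cutoff_profile_def exp_neg_inv_def)
qed

lemma cutoff_profile_nonneg: "0 \<le> cutoff_profile s"
  by (simp add: cutoff_profile_def exp_neg_inv_nonneg)

lemma smooth_cutoff: "smooth cutoff"
  using smooth_compose[OF smooth_cutoff_profile smooth_poly[of "[:0, 0, 1:]"]]
  unfolding cutoff_def[abs_def] by (simp add: power2_eq_square)

lemma cutoff_eq_1: "\<bar>x\<bar> \<le> 1 \<Longrightarrow> cutoff x = 1"
  by (simp add: cutoff_def cutoff_profile_eq_1 abs_square_le_1)

lemma cutoff_eq_0: "2 \<le> \<bar>x\<bar> \<Longrightarrow> cutoff x = 0"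
  using power_mono[of 2 "\<bar>x\<bar>" 2] by (simp add: cutoff_def cutoff_profile_eq_0)

lemma cutoff_antimono: "\<bar>x\<bar> \<le> \<bar>y\<bar> \<Longrightarrow> cutoff y \<le> cutoff x"
  unfolding cutoff_def by (intro cutoff_profile_antimono) (simp add: abs_le_square_iff)

lemma cutoff_nonneg: "0 \<le> cutoff x"
  by (simp add: cutoff_def cutoff_profile_nonneg)

lemma cutoff_le_1: "cutoff x \<le> 1"
  using cutoff_antimono[of 0 x] cutoff_eq_1[of 0] by simp

lemma higher_deriv_cutoff_eq_0:
  assumes "0 < k" and "\<bar>x\<bar> < 1 \<or> 2 < \<bar>x\<bar>"
  shows "(deriv ^^ k) cutoff x = 0"
proof -
  obtain c where "\<forall>\<^sub>F y in nhds x. cutoff y = c"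
  proof (cases "\<bar>x\<bar> < 1")
    case True
    have "open {y :: real. \<bar>y\<bar> < 1}" by (intro open_Collect_less continuous_intros)
    then have "\<forall>\<^sub>F y in nhds x. \<bar>y\<bar> < 1"
      using eventually_nhds_in_open True by fastforce
    then show ?thesis by (rule that[OF eventually_mono]) (simp add: cutoff_eq_1)
  next
    case False
    have "open {y :: real. 2 < \<bar>y\<bar>}" by (intro open_Collect_less continuous_intros)
    then have "\<forall>\<^sub>F y in nhds x. 2 < \<bar>y\<bar>"
      using eventually_nhds_in_open False assms(2) by fastforce
    then show ?thesis by (rule that[OF eventually_mono]) (simp add: cutoff_eq_0)
  qed
  then have "(deriv ^^ k) cutoff x = (deriv ^^ k) (\<lambda>_. c) x"
    by (intro higher_deriv_cong_ev) auto
  also have "\<dots> = 0"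
  proof -
    have "(deriv ^^ j) (\<lambda>_. 0) = (\<lambda>_. 0 :: real)" for j
      by (induction j) auto
    then show ?thesis
      using \<open>0 < k\<close> by (cases k) (simp_all add: funpow_Suc_right del: funpow.simps)
  qed
  finally show ?thesis .
qed

lemma higher_deriv_cutoff_bounded: "\<exists>B. \<forall>x. \<bar>(deriv ^^ k) cutoff x\<bar> \<le> B"
proof (cases k)
  case 0
  then show ?thesis using cutoff_nonneg cutoff_le_1 by (intro exI[of _ 1]) auto
next
  case (Suc j)
  have "smooth ((deriv ^^ k) cutoff)"
    using smooth_cutoff by (induction k) (auto intro: smooth_deriv)
  then show ?thesis
    using higher_deriv_cutoff_eq_0[of k] Suc
    by (intro bounded_if_vanishes_outside[of _ 2] smooth_continuous_on) auto
qed

lemma deriv_cutoff_sign: "x * deriv cutoff x \<le> 0"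
proof -
  have "(cutoff has_real_derivative deriv cutoff_profile (x\<^sup>2) * (2 * x)) (at x)"
    unfolding cutoff_def[abs_def]
    by (intro DERIV_chain2[OF smooth_has_real_derivative[OF smooth_cutoff_profile]])
       (auto intro!: derivative_eq_intros)
  then have "x * deriv cutoff x = 2 * (x * x) * deriv cutoff_profile (x\<^sup>2)"
    by (subst DERIV_imp_deriv) (auto simp: algebra_simps)
  moreover have "deriv cutoff_profile (x\<^sup>2) \<le> 0"
    by (rule has_real_derivative_nonpos_if_antimono
        [OF smooth_has_real_derivative[OF smooth_cutoff_profile] cutoff_profile_antimono])
  ultimately show ?thesis
    by (metis mult_nonneg_nonpos mult_nonneg_nonneg zero_le_numeral zero_le_square)
qed

section \<open>Polynomial weights and truncated test functions\<close>

definition weight :: "real \<Rightarrow> real \<Rightarrow> real" where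
  "weight r x = (1 + x\<^sup>2) powr r"

lemma one_plus_square_pos: "0 < 1 + (x :: real)\<^sup>2"
  by (intro add_pos_nonneg) auto

lemma weight_pos: "0 < weight r x"
  using one_plus_square_pos[of x] by (simp add: weight_def)

lemma weight_0 [simp]: "weight 0 x = 1"
  using one_plus_square_pos[of x] by (simp add: weight_def)

lemma weight_1: "weight 1 x = 1 + x\<^sup>2"
  using one_plus_square_pos[of x] by (simp add: weight_def)

lemma weight_add: "weight (r + s) x = weight r x * weight s x"
  by (simp add: weight_def powr_add)

lemma weight_ge_1: "0 \<le> r \<Longrightarrow> 1 \<le> weight r x"
  by (simp add: weight_def ge_one_powr_ge_zero)

lemma weight_mono: "0 \<le> r \<Longrightarrow> \<bar>x\<bar> \<le> \<bar>y\<bar> \<Longrightarrow> weight r x \<le> weight r y"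
  unfolding weight_def by (intro powr_mono2) (auto simp: abs_le_square_iff)

lemma weight_mono_exponent: "r \<le> s \<Longrightarrow> weight r x \<le> weight s x"
  unfolding weight_def by (intro powr_mono) auto

lemma weight_double_le: "0 \<le> r \<Longrightarrow> 0 \<le> L \<Longrightarrow> L \<le> \<bar>x\<bar> \<Longrightarrow> weight r (2 * L) \<le> 4 powr r * weight r x"
  unfolding weight_def powr_mult[symmetric]
  using power_mono[of L "\<bar>x\<bar>" 2] by (intro powr_mono2) (auto simp: power_mult_distrib)

lemma smooth_weight: "smooth (weight r)"
proof -
  have "poly [:1, 0, 1:] x = 1 + x\<^sup>2" for x :: real
    by (simp add: power2_eq_square)
  then show ?thesis
    using smooth_poly_powr[of "[:1, 0, 1:]" r] one_plus_square_pos
    unfolding weight_def[abs_def] by simp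
qed

lemma has_real_derivative_weight:
  "(weight r has_real_derivative 2 * r * x * weight (r - 1) x) (at x)"
  unfolding weight_def[abs_def]
  by (auto intro!: derivative_eq_intros DERIV_fun_powr simp: one_plus_square_pos)

lemma deriv_weight: "deriv (weight r) = (\<lambda>x. 2 * r * x * weight (r - 1) x)"
  by (intro deriv_eqI has_real_derivative_weight)

lemma deriv2_weight:
  "deriv (deriv (weight r)) x = 2 * r * weight (r - 1) x + 4 * r * (r - 1) * x\<^sup>2 * weight (r - 2) x"
proof -
  have "((\<lambda>x. 2 * r * x * weight (r - 1) x) has_real_derivative
      2 * r * weight (r - 1) x + 2 * r * x * (2 * (r - 1) * x * weight (r - 1 - 1) x)) (at x)"
    by (auto intro!: derivative_eq_intros has_real_derivative_weight)
  then show ?thesis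
    unfolding deriv_weight by (subst DERIV_imp_deriv) (auto simp: power2_eq_square algebra_simps)
qed

lemma abs_deriv2_weight_le:
  assumes "1 \<le> r"
  shows "\<bar>deriv (deriv (weight r)) x\<bar> \<le> (2 * r + 4 * r * (r - 1)) * weight (r - 1) x"
proof -
  have "x\<^sup>2 * weight (r - 2) x \<le> weight 1 x * weight (r - 2) x"
    by (intro mult_right_mono) (auto simp: weight_1 less_imp_le[OF weight_pos])
  also have "\<dots> = weight (r - 1) x"
    using weight_add[of 1 "r - 2" x] by simp
  finally have "4 * r * (r - 1) * x\<^sup>2 * weight (r - 2) x \<le> 4 * r * (r - 1) * weight (r - 1) x"
    using assms by (simp add: mult.assoc mult_left_mono)
  moreover have "0 \<le> 4 * r * (r - 1) * x\<^sup>2 * weight (r - 2) x" "0 \<le> 2 * r * weight (r - 1) x"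
    using assms weight_pos[of "r - 2" x] weight_pos[of "r - 1" x] by simp_all
  moreover have "(2 * r + 4 * r * (r - 1)) * weight (r - 1) x
      = 2 * r * weight (r - 1) x + 4 * r * (r - 1) * weight (r - 1) x"
    by (simp add: algebra_simps)
  ultimately show ?thesis
    unfolding deriv2_weight by linarith
qed

text \<open>
  Subtracting weight r (2 * L) makes the factor in front of cutoff' nonpositive on its support;
  this gives the boundary part of the drift term a sign.
\<close>

definition weight_test :: "real \<Rightarrow> real \<Rightarrow> real \<Rightarrow> real" where
  "weight_test r L x = (weight r x - weight r (2 * L)) * cutoff (x / L)"

lemma smooth_weight_test: "smooth (weight_test r L)"
  unfolding weight_test_def[abs_def]
  by (intro smooth_mult smooth_diff smooth_weight smooth_const smooth_scale smooth_cutoff)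

lemma cutoff_scaled_eq_0: "0 < L \<Longrightarrow> 2 * L \<le> \<bar>x\<bar> \<Longrightarrow> cutoff (x / L) = 0"
  by (intro cutoff_eq_0) (simp add: abs_divide field_simps)

lemma smooth_compact_weight_test: "0 < L \<Longrightarrow> smooth_compact (weight_test r L)"
  by (rule smooth_compact_if_vanishes[OF smooth_weight_test, of "2 * L"])
     (simp add: weight_test_def cutoff_scaled_eq_0)

lemma smooth_compact_weight_cutoff: "0 < L \<Longrightarrow> smooth_compact (\<lambda>x. weight r x * cutoff (x / L))"
  by (rule smooth_compact_if_vanishes[of _ "2 * L"])
     (simp_all add: cutoff_scaled_eq_0 smooth_mult smooth_weight smooth_scale smooth_cutoff)

lemma weight_test_lower: "weight r x * cutoff (x / L) - weight r (2 * L) \<le> weight_test r L x"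
proof -
  have "weight r (2 * L) * cutoff (x / L) \<le> weight r (2 * L)"
    using cutoff_le_1 weight_pos less_imp_le by (simp add: mult_left_le)
  then show ?thesis by (simp add: weight_test_def algebra_simps)
qed

lemma weight_test_upper:
  assumes "0 \<le> r" and "0 < L"
  shows "weight_test r L x \<le> (1 + 4 powr r) * weight r x - weight r (2 * L)"
proof -
  have "weight r (2 * L) * (1 - cutoff (x / L)) \<le> 4 powr r * weight r x"
  proof (cases "\<bar>x\<bar> \<le> L")
    case True
    then show ?thesis
      using assms by (simp add: cutoff_eq_1 abs_divide weight_pos less_imp_le)
  next
    case False
    then have "weight r (2 * L) \<le> 4 powr r * weight r x"
      using assms by (intro weight_double_le) auto
    moreover have "weight r (2 * L) * (1 - cutoff (x / L)) \<le> weight r (2 * L)"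
      using cutoff_nonneg weight_pos less_imp_le by (simp add: mult_left_le)
    ultimately show ?thesis by linarith
  qed
  moreover have "weight r x * cutoff (x / L) \<le> weight r x"
    using cutoff_le_1 weight_pos less_imp_le by (simp add: mult_left_le)
  ultimately show ?thesis
    by (simp add: weight_test_def algebra_simps)
qed

lemma deriv_weight_minus_const: "deriv (\<lambda>x. weight r x - c) = deriv (weight r)"
  unfolding deriv_weight
  by (intro deriv_eqI) (auto intro!: derivative_eq_intros has_real_derivative_weight)

lemma deriv_weight_test:
  "0 < L \<Longrightarrow> deriv (weight_test r L) x =
    2 * r * x * weight (r - 1) x * cutoff (x / L)
    + (weight r x - weight r (2 * L)) * deriv cutoff (x / L) / L"
  using deriv_mult_scaled[of "\<lambda>x. weight r x - weight r (2 * L)" cutoff L]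
  unfolding weight_test_def[abs_def] deriv_weight_minus_const
  by (simp add: smooth_diff smooth_weight smooth_const smooth_cutoff deriv_weight)

lemma deriv2_weight_test:
  "0 < L \<Longrightarrow> deriv (deriv (weight_test r L)) x =
    deriv (deriv (weight r)) x * cutoff (x / L) + 2 * deriv (weight r) x * deriv cutoff (x / L) / L
    + (weight r x - weight r (2 * L)) * deriv (deriv cutoff) (x / L) / L\<^sup>2"
  using deriv2_mult_scaled[of "\<lambda>x. weight r x - weight r (2 * L)" cutoff L x]
  unfolding weight_test_def[abs_def] deriv_weight_minus_const
  by (simp add: smooth_diff smooth_weight smooth_const smooth_cutoff)

lemma abs_deriv_weight_cutoff_le:
  assumes "0 \<le> r" and "0 < L" and B: "\<And>y. \<bar>deriv cutoff y\<bar> \<le> B"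
  shows "\<bar>2 * deriv (weight r) x * deriv cutoff (x / L) / L\<bar> \<le> 8 * r * B * weight (r - 1) x"
proof (cases "2 < \<bar>x / L\<bar>")
  case False
  define W where "W = weight (r - 1) x"
  have "\<bar>x\<bar> \<le> 2 * L"
    using False assms(2) by (simp add: abs_divide field_simps)
  then have "\<bar>deriv (weight r) x\<bar> \<le> 4 * r * L * W"
    using mult_right_mono[of "\<bar>x\<bar>" "2 * L" "2 * r * W"] assms(1) weight_pos[of "r - 1" x]
    by (simp add: W_def deriv_weight abs_mult algebra_simps)
  then have "\<bar>deriv (weight r) x\<bar> * \<bar>deriv cutoff (x / L)\<bar> \<le> 4 * r * L * W * B"
    using B[of "x / L"] assms(1,2) weight_pos[of "r - 1" x] by (intro mult_mono) (auto simp: W_def)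
  then have "2 * \<bar>deriv (weight r) x\<bar> * \<bar>deriv cutoff (x / L)\<bar> / L \<le> 8 * r * B * W"
    using assms(2) by (simp add: divide_le_eq algebra_simps)
  then show ?thesis
    using assms(2) by (simp add: W_def abs_mult abs_divide)
qed (use higher_deriv_cutoff_eq_0[of 1] B[of 0] assms(1) weight_pos[of "r - 1" x] in auto)

lemma abs_weight_gap_le:
  assumes "0 \<le> r" and "1 \<le> L" and "L \<le> \<bar>x\<bar>" and "\<bar>x\<bar> \<le> 2 * L"
  shows "\<bar>weight r x - weight r (2 * L)\<bar> \<le> 5 * 4 powr r * L\<^sup>2 * weight (r - 1) x"
proof -
  have "weight r x \<le> weight r (2 * L)"
    using assms by (intro weight_mono) auto
  then have "\<bar>weight r x - weight r (2 * L)\<bar> \<le> weight r (2 * L)"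
    using weight_pos[of r x] by simp
  also have "\<dots> \<le> 4 powr r * ((1 + x\<^sup>2) * weight (r - 1) x)"
    using weight_double_le[of r L x] weight_add[of 1 "r - 1" x] assms by (simp add: weight_1)
  also have "\<dots> \<le> 4 powr r * (5 * L\<^sup>2 * weight (r - 1) x)"
  proof -
    have "x\<^sup>2 \<le> 4 * L\<^sup>2" "1 \<le> L\<^sup>2"
      using power_mono[OF assms(4), of 2] assms(2) by (auto simp: power_mult_distrib one_le_power)
    then show ?thesis
      by (intro mult_left_mono mult_right_mono) (auto intro: less_imp_le[OF weight_pos])
  qed
  finally show ?thesis by (simp add: algebra_simps)
qed

lemma abs_weight_gap_cutoff_le:
  assumes "0 \<le> r" and "1 \<le> L" and B: "\<And>y. \<bar>deriv (deriv cutoff) y\<bar> \<le> B"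
  shows "\<bar>(weight r x - weight r (2 * L)) * deriv (deriv cutoff) (x / L) / L\<^sup>2\<bar>
    \<le> 5 * 4 powr r * B * weight (r - 1) x"
proof (cases "\<bar>x / L\<bar> < 1 \<or> 2 < \<bar>x / L\<bar>")
  case False
  define W where "W = weight (r - 1) x"
  have "\<bar>weight r x - weight r (2 * L)\<bar> \<le> 5 * 4 powr r * L\<^sup>2 * W"
    using False assms(1,2) by (intro abs_weight_gap_le[of r L x, folded W_def]) (auto simp: abs_divide field_simps)
  then have "\<bar>weight r x - weight r (2 * L)\<bar> * \<bar>deriv (deriv cutoff) (x / L)\<bar> \<le> 5 * 4 powr r * L\<^sup>2 * W * B"
    using B[of "x / L"] weight_pos[of "r - 1" x] by (intro mult_mono) (auto simp: W_def)
  then have "\<bar>weight r x - weight r (2 * L)\<bar> * \<bar>deriv (deriv cutoff) (x / L)\<bar> / L\<^sup>2 \<le> 5 * 4 powr r * B * W"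
    using assms(2) by (simp add: divide_le_eq algebra_simps)
  then show ?thesis
    by (simp add: W_def abs_mult abs_divide)
qed (use higher_deriv_cutoff_eq_0[of 2] B[of 0] weight_pos[of "r - 1" x] in \<open>auto simp: numeral_2_eq_2\<close>)

lemma abs_deriv2_weight_test_le:
  assumes "1 \<le> r"
  shows "\<exists>C. \<forall>L\<ge>1. \<forall>x. \<bar>deriv (deriv (weight_test r L)) x\<bar> \<le> C * weight (r - 1) x"
proof -
  obtain B1 B2 where B1: "\<And>y. \<bar>deriv cutoff y\<bar> \<le> B1" and B2: "\<And>y. \<bar>deriv (deriv cutoff) y\<bar> \<le> B2"
    using higher_deriv_cutoff_bounded[of 1] higher_deriv_cutoff_bounded[of 2]
    by (auto simp: numeral_2_eq_2)
  have "\<bar>deriv (deriv (weight_test r L)) x\<bar>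
      \<le> (2 * r + 4 * r * (r - 1) + 8 * r * B1 + 5 * 4 powr r * B2) * weight (r - 1) x"
    if L: "1 \<le> L" for L x
  proof -
    have "\<bar>deriv (deriv (weight r)) x * cutoff (x / L)\<bar> \<le> \<bar>deriv (deriv (weight r)) x\<bar>"
      using cutoff_nonneg[of "x / L"] cutoff_le_1[of "x / L"] by (simp add: abs_mult mult_left_le)
    then have "\<bar>deriv (deriv (weight r)) x * cutoff (x / L)\<bar> \<le> (2 * r + 4 * r * (r - 1)) * weight (r - 1) x"
      using abs_deriv2_weight_le[OF assms, of x] by linarith
    moreover have "\<bar>deriv (deriv (weight_test r L)) x\<bar>
        \<le> \<bar>deriv (deriv (weight r)) x * cutoff (x / L)\<bar> + \<bar>2 * deriv (weight r) x * deriv cutoff (x / L) / L\<bar>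
          + \<bar>(weight r x - weight r (2 * L)) * deriv (deriv cutoff) (x / L) / L\<^sup>2\<bar>"
      using L by (simp only: deriv2_weight_test order_trans[OF abs_triangle_ineq add_right_mono[OF abs_triangle_ineq]])
    ultimately show ?thesis
      using abs_deriv_weight_cutoff_le[of r L B1 x] abs_weight_gap_cutoff_le[of r L B2 x] assms L B1 B2
      by (simp add: algebra_simps)
  qed
  then show ?thesis by blast
qed

lemma drift_boundary_term_nonneg:
  fixes b :: "real \<Rightarrow> real"
  assumes "0 \<le> r" and "0 < L" and outward: "\<And>x. L \<le> \<bar>x\<bar> \<Longrightarrow> 0 < x * b x"
  shows "0 \<le> b x * ((weight r x - weight r (2 * L)) * deriv cutoff (x / L) / L)"
proof (cases "1 \<le> \<bar>x / L\<bar> \<and> \<bar>x / L\<bar> \<le> 2")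
  case True
  then have x: "L \<le> \<bar>x\<bar>" "\<bar>x\<bar> \<le> 2 * L"
    using assms(2) by (auto simp: abs_divide field_simps)
  have "(x / L) * deriv cutoff (x / L) \<le> 0"
    by (rule deriv_cutoff_sign)
  then have "b x * deriv cutoff (x / L) \<le> 0"
    using outward[OF x(1)] assms(2)
    by (auto simp: mult_le_0_iff zero_less_mult_iff divide_less_0_iff divide_le_0_iff)
  moreover have "weight r x \<le> weight r (2 * L)"
    using assms(1,2) x by (intro weight_mono) auto
  ultimately have "0 \<le> (weight r x - weight r (2 * L)) * (b x * deriv cutoff (x / L))"
    by (intro mult_nonpos_nonpos) simp_all
  then show ?thesis
    using assms(2) by (simp add: divide_nonneg_pos algebra_simps)
qed (use higher_deriv_cutoff_eq_0[of 1] in auto)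

lemma weight_test_drift:
  fixes b :: "real \<Rightarrow> real"
  assumes r: "0 \<le> r" and L: "0 < L" "4 * C \<le> L\<^sup>2"
    and confining: "\<And>x. (1 + x\<^sup>2) / 4 - C \<le> x * b x"
  shows "r / 2 * (weight r x * cutoff (x / L)) - 2 * r * C * weight (r - 1) x
    \<le> b x * deriv (weight_test r L) x"
proof -
  define W where "W = weight (r - 1) x"
  have W: "0 < W" by (simp add: W_def weight_pos)
  have C: "0 \<le> C" using confining[of 0] by simp
  have "(r / 2 * weight r x - 2 * r * C * W) * cutoff (x / L)
      = 2 * r * W * ((1 + x\<^sup>2) / 4 - C) * cutoff (x / L)"
    using weight_add[of 1 "r - 1" x] by (simp add: W_def weight_1 algebra_simps)
  also have "\<dots> \<le> 2 * r * W * (x * b x) * cutoff (x / L)"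
    using r W confining[of x] cutoff_nonneg by (intro mult_right_mono mult_left_mono) auto
  finally have drift: "r / 2 * (weight r x * cutoff (x / L)) - 2 * r * C * W
      \<le> b x * (2 * r * x * W) * cutoff (x / L)"
    using mult_left_le[OF cutoff_le_1[of "x / L"], of "2 * r * C * W"] r C W
    by (simp add: algebra_simps)
  have outward: "0 < y * b y" if "L \<le> \<bar>y\<bar>" for y
    using confining[of y] power_mono[OF that, of 2] L by (simp add: field_simps)
  have "b x * deriv (weight_test r L) x = b x * (2 * r * x * W) * cutoff (x / L)
      + b x * ((weight r x - weight r (2 * L)) * deriv cutoff (x / L) / L)"
    using L by (simp add: deriv_weight_test W_def algebra_simps)
  then show ?thesis
    using drift drift_boundary_term_nonneg[OF r L(1) outward, of x] unfolding W_def by linarith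
qed

section \<open>The confining potential\<close>

lemma deriv_V:
  assumes "1 \<le> n"
  shows "deriv (V n a) = (\<lambda>x. x ^ (2 * n - 1) + (\<Sum>k = 1..2 * n - 1. a k * x ^ (k - 1)))"
  unfolding V_def[abs_def] using assms
  by (intro deriv_eqI) (auto intro!: derivative_eq_intros simp: of_nat_diff ac_simps)

lemma x_times_deriv_V:
  assumes "1 \<le> n"
  shows "x * deriv (V n a) x = x ^ (2 * n) + (\<Sum>k = 1..2 * n - 1. a k * x ^ k)"
proof -
  have "x * deriv (V n a) x = x * x ^ (2 * n - 1) + (\<Sum>k = 1..2 * n - 1. a k * (x * x ^ (k - 1)))"
    by (simp add: deriv_V[OF assms] distrib_left sum_distrib_left algebra_simps)
  also have "\<dots> = x ^ (2 * n) + (\<Sum>k = 1..2 * n - 1. a k * x ^ k)"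
    using assms by (simp add: power_Suc[symmetric])
  finally show ?thesis .
qed

lemma abs_sum_power_le:
  fixes x :: real
  shows "\<bar>\<Sum>k = 1..m. a k * x ^ k\<bar> \<le> (\<Sum>k = 1..m. \<bar>a k\<bar>) * max 1 \<bar>x\<bar> ^ m"
proof -
  have "\<bar>\<Sum>k = 1..m. a k * x ^ k\<bar> \<le> (\<Sum>k = 1..m. \<bar>a k\<bar> * max 1 \<bar>x\<bar> ^ m)"
  proof (rule order_trans[OF sum_abs sum_mono])
    fix k assume "k \<in> {1..m}"
    then have "\<bar>x\<bar> ^ k \<le> max 1 \<bar>x\<bar> ^ m"
      by (intro order_trans[OF power_mono power_increasing]) auto
    then show "\<bar>a k * x ^ k\<bar> \<le> \<bar>a k\<bar> * max 1 \<bar>x\<bar> ^ m"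
      by (simp add: abs_mult power_abs mult_left_mono)
  qed
  then show ?thesis by (simp add: sum_distrib_right)
qed

lemma V_confining:
  assumes "1 \<le> n"
  shows "\<exists>C. \<forall>x. (1 + x\<^sup>2) / 4 - C \<le> x * deriv (V n a) x"
proof -
  define S where "S = (\<Sum>k = 1..2 * n - 1. \<bar>a k\<bar>)"
  define R where "R = 2 * S + 1"
  have S: "0 \<le> S" by (simp add: S_def sum_nonneg)
  note sum_le = abs_sum_power_le[where m = "2 * n - 1" and a = a, folded S_def]
  have "(1 + x\<^sup>2) / 4 - ((1 + R\<^sup>2) / 4 + S * R ^ (2 * n - 1)) \<le> x * deriv (V n a) x" for x
  proof (cases "R \<le> \<bar>x\<bar>")
    case True
    then have x: "1 \<le> \<bar>x\<bar>" "2 * S \<le> \<bar>x\<bar>" using S by (auto simp: R_def)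
    have "S * \<bar>x\<bar> ^ (2 * n - 1) \<le> \<bar>x\<bar> / 2 * \<bar>x\<bar> ^ (2 * n - 1)"
      using x by (intro mult_right_mono) auto
    also have "\<dots> = x ^ (2 * n) / 2"
      using assms by (simp add: power_Suc[symmetric] power_even_abs)
    finally have "S * \<bar>x\<bar> ^ (2 * n - 1) \<le> x ^ (2 * n) / 2" .
    moreover have "\<bar>\<Sum>k = 1..2 * n - 1. a k * x ^ k\<bar> \<le> S * \<bar>x\<bar> ^ (2 * n - 1)"
      using sum_le[of x] x(1) by (simp add: max_def)
    ultimately have "x ^ (2 * n) / 2 \<le> x * deriv (V n a) x"
      using x_times_deriv_V[OF assms, of x a] by linarith
    moreover have "1 \<le> x\<^sup>2"
      using x abs_square_less_1[of x] by linarith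
    moreover from this have "x\<^sup>2 \<le> x ^ (2 * n)"
      using assms power_increasing[of 1 n "x\<^sup>2"] by (simp add: power_mult)
    moreover have "0 \<le> S * R ^ (2 * n - 1)"
      using S by (simp add: R_def)
    ultimately show ?thesis
      unfolding add_divide_distrib using zero_le_power2[of R] by linarith
  next
    case False
    then have "S * max 1 \<bar>x\<bar> ^ (2 * n - 1) \<le> S * R ^ (2 * n - 1)"
      using S by (intro mult_left_mono power_mono) (auto simp: R_def)
    moreover have "x\<^sup>2 \<le> R\<^sup>2"
      using False power_mono[of "\<bar>x\<bar>" R 2] by simp
    moreover have "0 \<le> x ^ (2 * n)"
      by (simp add: power_mult)
    ultimately show ?thesis
      unfolding add_divide_distrib using sum_le[of x] x_times_deriv_V[OF assms, of x a] by linarith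
  qed
  then show ?thesis by blast
qed

section \<open>Bounds from an integrated dissipation inequality\<close>

lemma bounded_if_halving:
  fixes G :: "real \<Rightarrow> real"
  assumes "0 < \<tau>" and start: "\<And>t. 0 \<le> t \<Longrightarrow> t \<le> \<tau> \<Longrightarrow> G t \<le> M"
    and halving: "\<And>t. \<tau> \<le> t \<Longrightarrow> G t \<le> G (t - \<tau>) / 2 + B"
    and "0 \<le> t"
  shows "G t \<le> max M (2 * B)"
proof -
  have "\<forall>t. 0 \<le> t \<longrightarrow> t \<le> real (Suc k) * \<tau> \<longrightarrow> G t \<le> max M (2 * B)" for k
  proof (induction k)
    case 0
    then show ?case using start by fastforce
  next
    case (Suc k)
    show ?case
    proof (intro allI impI)
      fix t assume t: "0 \<le> t" "t \<le> real (Suc (Suc k)) * \<tau>"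
      show "G t \<le> max M (2 * B)"
      proof (cases "t \<le> \<tau>")
        case False
        then have "G (t - \<tau>) \<le> max M (2 * B)"
          using Suc.IH t by (auto simp: algebra_simps)
        then show ?thesis
          using halving[of t] False by (auto simp: max_def)
      qed (use start t in fastforce)
    qed
  qed
  moreover obtain k :: nat where "t / \<tau> \<le> real k"
    using real_arch_simple by blast
  then have "t \<le> real (Suc k) * \<tau>"
    using assms(1) by (simp add: divide_le_eq algebra_simps)
  ultimately show ?thesis
    using assms(4) by blast
qed

locale dissipative_family =
  fixes E :: "real \<Rightarrow> real \<Rightarrow> real" and G :: "real \<Rightarrow> real" and L\<^sub>0 c K A :: real
  assumes E_nonneg: "\<And>L t. 0 \<le> t \<Longrightarrow> 0 \<le> E L t"
    and E_mono: "\<And>L L' t. L\<^sub>0 \<le> L \<Longrightarrow> L \<le> L' \<Longrightarrow> 0 \<le> t \<Longrightarrow> E L t \<le> E L' t"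
    and E_continuous: "\<And>L. L\<^sub>0 \<le> L \<Longrightarrow> continuous_on {0..} (E L)"
    and E_tendsto: "\<And>t. 0 \<le> t \<Longrightarrow> (\<lambda>N. E (real N) t) \<longlonglongrightarrow> G t"
    and c_pos: "0 < c" and K_nonneg: "0 \<le> K" and A_nonneg: "0 \<le> A"
    and dissipation: "\<And>L s t. L\<^sub>0 \<le> L \<Longrightarrow> 0 \<le> s \<Longrightarrow> s \<le> t \<Longrightarrow>
      E L t + c * integral {s..t} (E L) \<le> K * G s + A * (t - s)"
begin

lemma G_nonneg: "0 \<le> t \<Longrightarrow> 0 \<le> G t"
  using E_nonneg by (intro tendsto_lowerbound[OF E_tendsto]) auto

lemma G_le: 
  assumes "0 \<le> t" and "\<And>L. L\<^sub>0 \<le> L \<Longrightarrow> E L t \<le> \<beta>"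
  shows "G t \<le> \<beta>"
proof (rule tendsto_upperbound[OF E_tendsto[OF assms(1)]])
  obtain N\<^sub>0 :: nat where "L\<^sub>0 \<le> real N\<^sub>0"
    using real_arch_simple by blast
  then show "\<forall>\<^sub>F N in sequentially. E (real N) t \<le> \<beta>"
    unfolding eventually_sequentially by (metis assms(2) order_trans of_nat_mono)
qed simp

lemma integral_E_nonneg: "L\<^sub>0 \<le> L \<Longrightarrow> 0 \<le> s \<Longrightarrow> 0 \<le> integral {s..t} (E L)"
  using E_nonneg
  by (intro Henstock_Kurzweil_Integration.integral_nonneg integrable_continuous_interval
      continuous_on_subset[OF E_continuous]) auto

lemma G_growth:
  assumes "0 \<le> s" and "s \<le> t"
  shows "G t \<le> K * G s + A * (t - s)"
proof (rule G_le)
  fix L assume L: "L\<^sub>0 \<le> L"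
  have "0 \<le> c * integral {s..t} (E L)"
    using integral_E_nonneg[OF L assms(1)] c_pos by simp
  then show "E L t \<le> K * G s + A * (t - s)"
    using dissipation[OF L assms] by linarith
qed (use assms in simp)

lemma E_dips:
  assumes "L\<^sub>0 \<le> L" and "0 \<le> s" and "s < t"
  shows "\<exists>u\<in>{s..t}. E L u \<le> (K * G s + A * (t - s)) / (c * (t - s))"
proof -
  have cont: "continuous_on {s..t} (E L)"
    using assms by (intro continuous_on_subset[OF E_continuous]) auto
  obtain u where u: "u \<in> {s..t}" "\<And>v. v \<in> {s..t} \<Longrightarrow> E L u \<le> E L v"
    using continuous_attains_inf[OF compact_Icc _ cont] assms by auto
  have "(t - s) * E L u \<le> integral {s..t} (E L)"
    using integral_le[OF integrable_const_ivl integrable_continuous_interval[OF cont], of "E L u"]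
      u(2) assms by (simp add: mult.commute)
  moreover have "E L t + c * integral {s..t} (E L) \<le> K * G s + A * (t - s)"
    using assms by (intro dissipation) auto
  ultimately have "c * (t - s) * E L u \<le> K * G s + A * (t - s)"
    using E_nonneg[of t L] c_pos assms
    by (smt (verit, best) mult.assoc mult_left_mono)
  then show ?thesis
    using u(1) c_pos assms by (auto simp: pos_le_divide_eq mult.commute)
qed

lemma G_dips:
  assumes "0 \<le> s" and "s < t"
  shows "\<exists>u\<in>{s..t}. G u \<le> (K * G s + A * (t - s)) / (c * (t - s))"
proof -
  define \<beta> where "\<beta> = (K * G s + A * (t - s)) / (c * (t - s))"
  define F where "F L = {u \<in> {s..t}. E (max L\<^sub>0 L) u \<le> \<beta>}" for L
  have "F L \<noteq> {}" for L
    using E_dips[of "max L\<^sub>0 L" s t] assms unfolding F_def \<beta>_def by fastforce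
  moreover have "compact (F L)" for L
  proof -
    have "continuous_on {s..t} (E (max L\<^sub>0 L))"
      using assms by (intro continuous_on_subset[OF E_continuous]) auto
    moreover have "F L = {s..t} \<inter> ({s..t} \<inter> E (max L\<^sub>0 L) -` {..\<beta>})"
      by (auto simp: F_def)
    ultimately show ?thesis
      by (metis compact_Int_closed compact_Icc continuous_closed_preimage closed_atLeastAtMost closed_atMost)
  qed
  moreover have "F L' \<subseteq> F L" if "L \<le> L'" for L L'
  proof
    fix u assume u: "u \<in> F L'"
    then have "E (max L\<^sub>0 L) u \<le> E (max L\<^sub>0 L') u"
      using \<open>L \<le> L'\<close> assms by (intro E_mono) (auto simp: F_def)
    then show "u \<in> F L" using u by (auto simp: F_def)
  qed
  ultimately obtain u where "u \<in> \<Inter> (range F)"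
    using compact_nest[of F] by blast
  then have "u \<in> {s..t}" "\<And>L. L\<^sub>0 \<le> L \<Longrightarrow> E L u \<le> \<beta>"
    by (auto simp: F_def) (metis max.absorb2)
  then show ?thesis
    using assms G_le[of u \<beta>] unfolding \<beta>_def by auto
qed

text \<open>
  On a window of length \<tau> the dissipation finds a time where G is small, and the growth bound
  carries this to the end of the window: G t \<le> G (t - \<tau>) / 2 + B.
\<close>

theorem G_bounded: "\<exists>M. \<forall>t\<ge>0. G t \<le> M"
proof -
  define \<tau> where "\<tau> = 2 * K\<^sup>2 / c + 1"
  define B where "B = K * A / c + A * \<tau>"
  have \<tau>: "0 < \<tau>" "c * \<tau> = 2 * K\<^sup>2 + c"
    using c_pos by (auto simp: \<tau>_def field_simps add_pos_nonneg)
  have halving: "G t \<le> G (t - \<tau>) / 2 + B" if t: "\<tau> \<le> t" for t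
  proof -
    obtain u where u: "u \<in> {t - \<tau>..t}" "G u \<le> (K * G (t - \<tau>) + A * \<tau>) / (c * \<tau>)"
      using G_dips[of "t - \<tau>" t] t \<open>0 < \<tau>\<close> by auto
    have "G t \<le> K * G u + A * \<tau>"
      using G_growth[of u t] u(1) t A_nonneg \<tau>
      by (smt (verit, best) atLeastAtMost_iff mult_left_mono)
    also have "K * G u \<le> K * ((K * G (t - \<tau>) + A * \<tau>) / (c * \<tau>))"
      using u(2) K_nonneg by (rule mult_left_mono)
    also have "\<dots> = K\<^sup>2 / (c * \<tau>) * G (t - \<tau>) + K * A / c"
      using c_pos \<tau>(1) by (simp add: field_simps power2_eq_square)
    also have "K\<^sup>2 / (c * \<tau>) * G (t - \<tau>) \<le> 1 / 2 * G (t - \<tau>)"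
    proof (rule mult_right_mono)
      have "0 < 2 * K\<^sup>2 + c" using c_pos by (simp add: add_nonneg_pos)
      then show "K\<^sup>2 / (c * \<tau>) \<le> 1 / 2" unfolding \<tau>(2) using c_pos by (simp add: divide_simps)
    qed (use G_nonneg[of "t - \<tau>"] t \<tau> in auto)
    finally show ?thesis by (simp add: B_def)
  qed
  have start: "G t \<le> K * G 0 + A * \<tau>" if "0 \<le> t" "t \<le> \<tau>" for t
    using G_growth[of 0 t] that A_nonneg by (smt (verit) mult_left_mono)
  show ?thesis
    using bounded_if_halving[of \<tau> G, OF \<tau>(1) start halving] by blast
qed

end

section \<open>Moments of weak solutions\<close>

lemma (in prob_space) integral_pair_fst_plus_snd:
  fixes h :: "'a \<Rightarrow> real"
  assumes h: "integrable M h"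
  shows "integrable (M \<Otimes>\<^sub>M M) (\<lambda>z. h (fst z) + h (snd z))"
    and "(\<integral>z. h (fst z) + h (snd z) \<partial>(M \<Otimes>\<^sub>M M)) = 2 * integral\<^sup>L M h"
proof -
  interpret pair_sigma_finite M M
    by (simp add: pair_sigma_finite_def sigma_finite_measure_axioms)
  have [measurable]: "h \<in> borel_measurable M"
    using h by blast
  have fst: "integrable (M \<Otimes>\<^sub>M M) (\<lambda>z. h (fst z))" "(\<integral>z. h (fst z) \<partial>(M \<Otimes>\<^sub>M M)) = integral\<^sup>L M h"
    using integrable_distr_eq[of fst "M \<Otimes>\<^sub>M M" M h] integral_distr[of fst "M \<Otimes>\<^sub>M M" M h] h
    by (simp_all add: distr_pair_fst)
  have snd: "integrable (M \<Otimes>\<^sub>M M) (\<lambda>z. h (snd z))" "(\<integral>z. h (snd z) \<partial>(M \<Otimes>\<^sub>M M)) = integral\<^sup>L M h"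
    using integrable_product_swap[OF fst(1)] integral_product_swap[of "\<lambda>z. h (fst z)"] fst(2)
    by (simp_all add: case_prod_beta')
  show "integrable (M \<Otimes>\<^sub>M M) (\<lambda>z. h (fst z) + h (snd z))"
    using fst snd by simp
  show "(\<integral>z. h (fst z) + h (snd z) \<partial>(M \<Otimes>\<^sub>M M)) = 2 * integral\<^sup>L M h"
    using fst snd by simp
qed

locale weak_solution =
  fixes n :: nat and a :: "nat \<Rightarrow> real" and \<mu> :: "real \<Rightarrow> real measure"
  assumes n: "n \<ge> 1"
    and prob_space: "\<And>t. t \<ge> 0 \<Longrightarrow> prob_space (\<mu> t)"
    and sets_eq_borel: "\<And>t. t \<ge> 0 \<Longrightarrow> sets (\<mu> t) = sets borel"
    and weak_equation: "\<And>f t. smooth_compact f \<Longrightarrow> t \<ge> 0 \<Longrightarrow>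
       ((\<lambda>s. \<integral>x. f x \<partial>\<mu> s) has_real_derivative
          (1/2 * (\<integral>z. dq_kernel f (fst z) (snd z) \<partial>(\<mu> t \<Otimes>\<^sub>M \<mu> t))
           - (\<integral>x. deriv (V n a) x * deriv f x \<partial>\<mu> t))) (at t within {0..})"
begin

lemma borel_measurable_continuous:
  "continuous_on UNIV f \<Longrightarrow> 0 \<le> t \<Longrightarrow> (f :: real \<Rightarrow> real) \<in> borel_measurable (\<mu> t)"
  using borel_measurable_continuous_onI measurable_cong_sets[OF sets_eq_borel refl] by blast

lemma integrable_vanishing_outside:
  assumes "continuous_on UNIV f" and "\<And>x. R < \<bar>x\<bar> \<Longrightarrow> f x = 0" and "0 \<le> t"
  shows "integrable (\<mu> t) (f :: real \<Rightarrow> real)"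
proof -
  interpret prob_space "\<mu> t" using prob_space assms(3) .
  obtain B where "\<And>x. \<bar>f x\<bar> \<le> B"
    using bounded_if_vanishes_outside[OF assms(1,2)] by blast
  then show ?thesis
    using assms by (intro integrable_const_bound[of _ B] borel_measurable_continuous) auto
qed

lemma integrable_le_weight:
  assumes "integrable (\<mu> t) (weight r)" and "s \<le> r" and "0 \<le> t"
  shows "integrable (\<mu> t) (weight s)"
  using assms weight_mono_exponent weight_pos
  by (intro Bochner_Integration.integrable_bound[OF assms(1)] borel_measurable_continuous
      smooth_continuous_on smooth_weight AE_I2) (auto simp: less_imp_le)

lemma continuous_on_integral:
  assumes "smooth_compact f"
  shows "continuous_on {0..} (\<lambda>s. \<integral>x. f x \<partial>\<mu> s)"
  unfolding continuous_on_eq_continuous_within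
  using weak_equation[OF assms] by (auto intro: DERIV_continuous)

end

locale weight_moment_step = weak_solution +
  fixes r M' C C\<^sub>2 :: real
  assumes r: "1 \<le> r"
    and integrable_weight: "\<And>t. 0 \<le> t \<Longrightarrow> integrable (\<mu> t) (weight r)"
    and lower_moment_le: "\<And>t. 0 \<le> t \<Longrightarrow> (\<integral>x. weight (r - 1) x \<partial>\<mu> t) \<le> M'"
    and confining: "\<And>x. (1 + x\<^sup>2) / 4 - C \<le> x * deriv (V n a) x"
    and deriv2_weight_test_le:
      "\<And>L x. 1 \<le> L \<Longrightarrow> \<bar>deriv (deriv (weight_test r L)) x\<bar> \<le> C\<^sub>2 * weight (r - 1) x"
begin

definition moment :: "real \<Rightarrow> real" where
  "moment t = (\<integral>x. weight r x \<partial>\<mu> t)"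

definition truncated_moment :: "real \<Rightarrow> real \<Rightarrow> real" where
  "truncated_moment L t = (\<integral>x. weight r x * cutoff (x / L) \<partial>\<mu> t)"

lemma M'_nonneg: "0 \<le> M'"
  using lower_moment_le[of 0] weight_pos
  by (smt (verit) AE_I2 integral_nonneg_AE)

lemma C_nonneg: "0 \<le> C"
  using confining[of 0] by simp

lemma C\<^sub>2_nonneg: "0 \<le> C\<^sub>2"
  using deriv2_weight_test_le[of 1 0] weight_pos[of "r - 1" 0]
  by (smt (verit) mult_neg_pos)

lemma integrable_lower_weight: "0 \<le> t \<Longrightarrow> integrable (\<mu> t) (weight (r - 1))"
  using integrable_le_weight[OF integrable_weight] by simp

lemma integrable_weight_cutoff: "0 < L \<Longrightarrow> 0 \<le> t \<Longrightarrow> integrable (\<mu> t) (\<lambda>x. weight r x * cutoff (x / L))"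
  by (rule integrable_vanishing_outside[of _ "2 * L"])
     (auto simp: cutoff_scaled_eq_0 intro!: smooth_continuous_on smooth_mult smooth_weight
      smooth_scale smooth_cutoff)

lemma integrable_weight_test: "0 < L \<Longrightarrow> 0 \<le> t \<Longrightarrow> integrable (\<mu> t) (weight_test r L)"
  by (rule integrable_vanishing_outside[OF smooth_continuous_on[OF smooth_weight_test], of "2 * L"])
     (simp_all add: weight_test_def cutoff_scaled_eq_0)

lemma dq_kernel_weight_test_le:
  assumes "1 \<le> L"
  shows "dq_kernel (weight_test r L) x y \<le> C\<^sub>2 * (weight (r - 1) x + weight (r - 1) y)"
proof (rule dq_kernel_le[OF smooth_weight_test])
  fix z assume "min x y \<le> z" "z \<le> max x y"
  then have "weight (r - 1) z \<le> weight (r - 1) x + weight (r - 1) y"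
    using r weight_mono[of "r - 1" z x] weight_mono[of "r - 1" z y] weight_pos[of "r - 1"]
    by (smt (verit) abs_le_iff max_def min_def)
  then show "deriv (deriv (weight_test r L)) z \<le> C\<^sub>2 * (weight (r - 1) x + weight (r - 1) y)"
    using deriv2_weight_test_le[OF assms, of z] C\<^sub>2_nonneg
    by (smt (verit) mult_left_mono)
qed

lemma kernel_integral_le:
  assumes "1 \<le> L" and "0 \<le> t"
  shows "(\<integral>z. dq_kernel (weight_test r L) (fst z) (snd z) \<partial>(\<mu> t \<Otimes>\<^sub>M \<mu> t)) \<le> 2 * C\<^sub>2 * M'"
proof (cases "integrable (\<mu> t \<Otimes>\<^sub>M \<mu> t) (\<lambda>z. dq_kernel (weight_test r L) (fst z) (snd z))")
  case True
  interpret prob_space "\<mu> t" using prob_space assms(2) .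
  note pair = integral_pair_fst_plus_snd[OF integrable_lower_weight[OF assms(2)]]
  have "(\<integral>z. dq_kernel (weight_test r L) (fst z) (snd z) \<partial>(\<mu> t \<Otimes>\<^sub>M \<mu> t))
      \<le> (\<integral>z. C\<^sub>2 * (weight (r - 1) (fst z) + weight (r - 1) (snd z)) \<partial>(\<mu> t \<Otimes>\<^sub>M \<mu> t))"
    using True pair(1) dq_kernel_weight_test_le[OF assms(1)] by (intro integral_mono) auto
  also have "\<dots> = 2 * C\<^sub>2 * (\<integral>x. weight (r - 1) x \<partial>\<mu> t)"
    using pair(2) by simp
  also have "\<dots> \<le> 2 * C\<^sub>2 * M'"
    using lower_moment_le[OF assms(2)] C\<^sub>2_nonneg by (simp add: mult_left_mono)
  finally show ?thesis .
qed (simp add: not_integrable_integral_eq C\<^sub>2_nonneg M'_nonneg)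

text \<open>For L \<ge> L_0, x V'(x) > 0 wherever cutoff' (x / L) \<noteq> 0.\<close>

definition L\<^sub>0 :: real where
  "L\<^sub>0 = max 1 (4 * C)"

lemma drift_integral_ge:
  assumes "L\<^sub>0 \<le> L" and "0 \<le> t"
  shows "r / 2 * truncated_moment L t - 2 * r * C * M'
    \<le> (\<integral>x. deriv (V n a) x * deriv (weight_test r L) x \<partial>\<mu> t)"
proof -
  interpret prob_space "\<mu> t" using prob_space assms(2) .
  have "1 \<le> L" "4 * C \<le> L"
    using assms(1) by (auto simp: L\<^sub>0_def)
  moreover from this have "L \<le> L\<^sup>2"
    using mult_left_mono[of 1 L L] by (simp add: power2_eq_square)
  ultimately have L: "0 < L" "4 * C \<le> L\<^sup>2"
    by auto
  have "r / 2 * truncated_moment L t - 2 * r * C * (\<integral>x. weight (r - 1) x \<partial>\<mu> t)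
      = (\<integral>x. r / 2 * (weight r x * cutoff (x / L)) - 2 * r * C * weight (r - 1) x \<partial>\<mu> t)"
    using integrable_weight_cutoff[OF L(1) assms(2)] integrable_lower_weight[OF assms(2)]
    by (simp add: truncated_moment_def)
  also have "\<dots> \<le> (\<integral>x. deriv (V n a) x * deriv (weight_test r L) x \<partial>\<mu> t)"
  proof (rule integral_mono)
    show "integrable (\<mu> t) (\<lambda>x. r / 2 * (weight r x * cutoff (x / L)) - 2 * r * C * weight (r - 1) x)"
      using integrable_weight_cutoff[OF L(1) assms(2)] integrable_lower_weight[OF assms(2)] by simp
    show "integrable (\<mu> t) (\<lambda>x. deriv (V n a) x * deriv (weight_test r L) x)"
    proof (rule integrable_vanishing_outside[OF _ _ assms(2), of _ "2 * L"])
      show "continuous_on UNIV (\<lambda>x. deriv (V n a) x * deriv (weight_test r L) x)"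
        unfolding deriv_V[OF n]
        by (intro continuous_intros smooth_continuous_on smooth_deriv smooth_weight_test)
      show "deriv (V n a) x * deriv (weight_test r L) x = 0" if "2 * L < \<bar>x\<bar>" for x
        using that L(1) higher_deriv_cutoff_eq_0[of 1 "x / L"]
        by (simp add: deriv_weight_test cutoff_scaled_eq_0 abs_divide field_simps)
    qed
    show "r / 2 * (weight r x * cutoff (x / L)) - 2 * r * C * weight (r - 1) x
        \<le> deriv (V n a) x * deriv (weight_test r L) x" for x
      using weight_test_drift[OF _ L confining] r by (simp add: mult.commute)
  qed
  finally show ?thesis
    using lower_moment_le[OF assms(2)] r C_nonneg
    by (smt (verit) mult_left_mono mult_nonneg_nonneg)
qed

definition A :: real where
  "A = C\<^sub>2 * M' + 2 * r * C * M'"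

lemma L\<^sub>0_ge_1: "1 \<le> L\<^sub>0"
  by (simp add: L\<^sub>0_def)

lemma generator_le:
  assumes "L\<^sub>0 \<le> L" and "0 \<le> t"
  shows "1/2 * (\<integral>z. dq_kernel (weight_test r L) (fst z) (snd z) \<partial>(\<mu> t \<Otimes>\<^sub>M \<mu> t))
      - (\<integral>x. deriv (V n a) x * deriv (weight_test r L) x \<partial>\<mu> t)
    \<le> A - r / 2 * truncated_moment L t"
  using kernel_integral_le[of L t] drift_integral_ge[OF assms] assms L\<^sub>0_ge_1
  by (simp add: A_def)

lemma truncated_moment_le_test_integral:
  assumes "0 < L" and "0 \<le> t"
  shows "truncated_moment L t - weight r (2 * L) \<le> (\<integral>x. weight_test r L x \<partial>\<mu> t)"
proof -
  interpret prob_space "\<mu> t" using prob_space assms(2) .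
  have "(\<integral>x. weight r x * cutoff (x / L) - weight r (2 * L) \<partial>\<mu> t) \<le> (\<integral>x. weight_test r L x \<partial>\<mu> t)"
    using integrable_weight_cutoff[OF assms] integrable_weight_test[OF assms] weight_test_lower
    by (intro integral_mono) auto
  then show ?thesis
    using integrable_weight_cutoff[OF assms] by (simp add: truncated_moment_def prob_space)
qed

lemma test_integral_le_moment:
  assumes "0 < L" and "0 \<le> t"
  shows "(\<integral>x. weight_test r L x \<partial>\<mu> t) \<le> (1 + 4 powr r) * moment t - weight r (2 * L)"
proof -
  interpret prob_space "\<mu> t" using prob_space assms(2) .
  have "(\<integral>x. weight_test r L x \<partial>\<mu> t) \<le> (\<integral>x. (1 + 4 powr r) * weight r x - weight r (2 * L) \<partial>\<mu> t)"
    using integrable_weight[OF assms(2)] integrable_weight_test[OF assms] weight_test_upper r assms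
    by (intro integral_mono) auto
  then show ?thesis
    using integrable_weight[OF assms(2)] by (simp add: moment_def prob_space)
qed

lemma truncated_moment_nonneg: "0 \<le> truncated_moment L t"
  unfolding truncated_moment_def
  by (intro integral_nonneg_AE AE_I2 mult_nonneg_nonneg cutoff_nonneg less_imp_le[OF weight_pos])

lemma truncated_moment_mono:
  assumes "0 < L" and "L \<le> L'" and "0 \<le> t"
  shows "truncated_moment L t \<le> truncated_moment L' t"
  unfolding truncated_moment_def
proof (rule integral_mono)
  show "integrable (\<mu> t) (\<lambda>x. weight r x * cutoff (x / L))"
    "integrable (\<mu> t) (\<lambda>x. weight r x * cutoff (x / L'))"
    using assms by (auto intro: integrable_weight_cutoff)
  show "weight r x * cutoff (x / L) \<le> weight r x * cutoff (x / L')" for x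
    using assms weight_pos[of r x]
    by (intro mult_left_mono cutoff_antimono) (auto simp: abs_divide divide_left_mono)
qed

lemma truncated_moment_continuous: "0 < L \<Longrightarrow> continuous_on {0..} (truncated_moment L)"
  unfolding truncated_moment_def[abs_def]
  by (intro continuous_on_integral smooth_compact_weight_cutoff)

lemma truncated_moment_tendsto:
  assumes "0 \<le> t"
  shows "(\<lambda>N. truncated_moment (real N) t) \<longlonglongrightarrow> moment t"
  unfolding truncated_moment_def moment_def
proof (rule integral_dominated_convergence[where w = "weight r"])
  show "AE x in \<mu> t. (\<lambda>N. weight r x * cutoff (x / real N)) \<longlonglongrightarrow> weight r x"
  proof (rule AE_I2)
    fix x :: real
    obtain N\<^sub>0 :: nat where N\<^sub>0: "max 1 \<bar>x\<bar> \<le> real N\<^sub>0"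
      using real_arch_simple by blast
    have "cutoff (x / real N) = 1" if "N\<^sub>0 \<le> N" for N
    proof -
      have "\<bar>x\<bar> \<le> real N" "0 < real N"
        using N\<^sub>0 that of_nat_mono[OF that] by linarith+
      then show ?thesis
        by (intro cutoff_eq_1) (simp add: abs_divide)
    qed
    then have "\<forall>\<^sub>F N in sequentially. weight r x * cutoff (x / real N) = weight r x"
      unfolding eventually_sequentially by auto
    then show "(\<lambda>N. weight r x * cutoff (x / real N)) \<longlonglongrightarrow> weight r x"
      by (rule tendsto_eventually)
  qed
  show "AE x in \<mu> t. norm (weight r x * cutoff (x / real N)) \<le> weight r x" for N
    using cutoff_nonneg cutoff_le_1 weight_pos
    by (intro AE_I2) (simp add: abs_mult mult_left_le less_imp_le)
  show "weight r \<in> borel_measurable (\<mu> t)"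
    by (rule borel_measurable_continuous[OF smooth_continuous_on[OF smooth_weight] assms])
  show "(\<lambda>x. weight r x * cutoff (x / real N)) \<in> borel_measurable (\<mu> t)" for N
    by (rule borel_measurable_continuous[OF smooth_continuous_on assms])
       (intro smooth_mult smooth_weight smooth_scale smooth_cutoff)
qed (rule integrable_weight[OF assms])

lemma test_integral_increment_le:
  assumes L: "L\<^sub>0 \<le> L" and s: "0 \<le> s" "s \<le> t"
  shows "(\<integral>x. weight_test r L x \<partial>\<mu> t) - (\<integral>x. weight_test r L x \<partial>\<mu> s)
    \<le> A * (t - s) - r / 2 * integral {s..t} (truncated_moment L)"
proof -
  have L0: "0 < L" using L L\<^sub>0_ge_1 by simp
  define F where "F u = (\<integral>x. weight_test r L x \<partial>\<mu> u)" for u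
  define \<Lambda> where "\<Lambda> u = 1/2 * (\<integral>z. dq_kernel (weight_test r L) (fst z) (snd z) \<partial>(\<mu> u \<Otimes>\<^sub>M \<mu> u))
      - (\<integral>x. deriv (V n a) x * deriv (weight_test r L) x \<partial>\<mu> u)" for u
  have "(\<Lambda> has_integral F t - F s) {s..t}"
  proof (rule fundamental_theorem_of_calculus[OF s(2)])
    fix u assume u: "u \<in> {s..t}"
    then have "(F has_real_derivative \<Lambda> u) (at u within {0..})"
      using weak_equation[OF smooth_compact_weight_test[OF L0, of r], of u] s
      by (simp add: F_def[abs_def] \<Lambda>_def)
    then have "(F has_real_derivative \<Lambda> u) (at u within {s..t})"
      by (rule DERIV_subset) (use s in auto)
    then show "(F has_vector_derivative \<Lambda> u) (at u within {s..t})"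
      by (simp add: has_real_derivative_iff_has_vector_derivative)
  qed
  moreover have "((\<lambda>u. A - r / 2 * truncated_moment L u) has_integral
      A * (t - s) - r / 2 * integral {s..t} (truncated_moment L)) {s..t}"
  proof -
    have "truncated_moment L integrable_on {s..t}"
      using s by (intro integrable_continuous_interval continuous_on_subset[OF truncated_moment_continuous[OF L0]]) auto
    then have "((\<lambda>u. r / 2 * truncated_moment L u) has_integral r / 2 * integral {s..t} (truncated_moment L)) {s..t}"
      by (intro has_integral_mult_right integrable_integral)
    moreover have "((\<lambda>u. A) has_integral A * (t - s)) {s..t}"
      using has_integral_const_real[of A s t] s by (simp add: mult.commute)
    ultimately show ?thesis
      by (intro has_integral_diff)
  qed
  ultimately show ?thesis
    unfolding F_def by (rule has_integral_le) (use generator_le[OF L] s in \<open>auto simp: \<Lambda>_def\<close>)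
qed

lemma dissipation:
  assumes L: "L\<^sub>0 \<le> L" and s: "0 \<le> s" "s \<le> t"
  shows "truncated_moment L t + r / 2 * integral {s..t} (truncated_moment L)
    \<le> (1 + 4 powr r) * moment s + A * (t - s)"
proof -
  have "0 < L" using L L\<^sub>0_ge_1 by simp
  then show ?thesis
    using test_integral_increment_le[OF assms] truncated_moment_le_test_integral[of L t]
      test_integral_le_moment[of L s] s
    by linarith
qed

theorem moment_bounded: "\<exists>M. \<forall>t\<ge>0. moment t \<le> M"
proof -
  interpret dissipative_family truncated_moment moment L\<^sub>0 "r / 2" "1 + 4 powr r" A
  proof
    show "0 \<le> A"
      using M'_nonneg C\<^sub>2_nonneg C_nonneg r by (simp add: A_def)
    show "truncated_moment L t + r / 2 * integral {s..t} (truncated_moment L)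
        \<le> (1 + 4 powr r) * moment s + A * (t - s)" if "L\<^sub>0 \<le> L" "0 \<le> s" "s \<le> t" for L s t
      using that by (rule dissipation)
    show "truncated_moment L t \<le> truncated_moment L' t" if "L\<^sub>0 \<le> L" "L \<le> L'" "0 \<le> t" for L L' t
      using that L\<^sub>0_ge_1 by (intro truncated_moment_mono) auto
    show "continuous_on {0..} (truncated_moment L)" if "L\<^sub>0 \<le> L" for L
      using that L\<^sub>0_ge_1 by (intro truncated_moment_continuous) auto
  qed (use r in \<open>auto intro: truncated_moment_nonneg truncated_moment_tendsto\<close>)
  show ?thesis by (rule G_bounded)
qed

end

lemma abs_power_le_weight: "\<bar>x\<bar> ^ p \<le> weight (real p / 2) x"
proof (cases "x = 0")
  case True
  then show ?thesis
    using weight_ge_1[of "real p / 2" x] by (cases p) auto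
next
  case False
  have "\<bar>x\<bar> ^ p = \<bar>x\<bar> powr (2 * (real p / 2))"
    using False by (simp add: powr_realpow)
  also have "\<dots> = (\<bar>x\<bar> powr 2) powr (real p / 2)"
    by (rule powr_powr[symmetric])
  also have "\<dots> = (x\<^sup>2) powr (real p / 2)"
    using False by (simp add: powr_numeral)
  also have "\<dots> \<le> weight (real p / 2) x"
    unfolding weight_def by (intro powr_mono2) auto
  finally show ?thesis .
qed

lemma weight_le_abs_power:
  assumes "0 \<le> r" and "2 * r \<le> real N"
  shows "weight r x \<le> 2 powr r * (1 + \<bar>x\<bar> ^ N)"
proof (cases "\<bar>x\<bar> \<le> 1")
  case True
  then have "weight r x \<le> 2 powr r"
    unfolding weight_def using assms(1) by (intro powr_mono2) (auto simp: abs_square_le_1)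
  moreover have "2 powr r \<le> 2 powr r * (1 + \<bar>x\<bar> ^ N)"
    using mult_left_mono[of 1 "1 + \<bar>x\<bar> ^ N" "2 powr r"] by simp
  ultimately show ?thesis by linarith
next
  case False
  then have "weight r x \<le> (2 * x\<^sup>2) powr r"
    unfolding weight_def using assms(1) abs_square_less_1[of x] by (intro powr_mono2) auto
  also have "\<dots> = 2 powr r * (x\<^sup>2) powr r"
    by (simp add: powr_mult)
  also have "(x\<^sup>2) powr r = \<bar>x\<bar> powr (2 * r)"
  proof -
    have "x\<^sup>2 = \<bar>x\<bar> powr 2"
      using False by (simp add: powr_numeral)
    then show ?thesis
      by (simp only: powr_powr)
  qed
  also have "2 powr r * \<bar>x\<bar> powr (2 * r) \<le> 2 powr r * \<bar>x\<bar> ^ N"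
    using False assms(2) by (simp add: powr_realpow[symmetric] powr_mono)
  finally show ?thesis
    unfolding distrib_left using powr_ge_zero[of 2 r] by linarith
qed

context weak_solution
begin

lemma weight_moment_bounded_step:
  assumes "1 \<le> r" and "\<And>t. 0 \<le> t \<Longrightarrow> integrable (\<mu> t) (weight r)"
    and "\<And>t. 0 \<le> t \<Longrightarrow> (\<integral>x. weight (r - 1) x \<partial>\<mu> t) \<le> M'"
  shows "\<exists>M. \<forall>t\<ge>0. (\<integral>x. weight r x \<partial>\<mu> t) \<le> M"
proof -
  obtain C where "\<And>x. (1 + x\<^sup>2) / 4 - C \<le> x * deriv (V n a) x"
    using V_confining[OF n] by blast
  moreover obtain C\<^sub>2 where "\<And>L x. 1 \<le> L \<Longrightarrow> \<bar>deriv (deriv (weight_test r L)) x\<bar> \<le> C\<^sub>2 * weight (r - 1) x"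
    using abs_deriv2_weight_test_le[OF assms(1)] by blast
  ultimately interpret weight_moment_step n a \<mu> r M' C C\<^sub>2
    using assms by unfold_locales auto
  show ?thesis
    using moment_bounded by (simp add: moment_def)
qed

lemma weight_moment_le:
  assumes "r \<le> s" and "0 \<le> t" and "integrable (\<mu> t) (weight s)"
  shows "(\<integral>x. weight r x \<partial>\<mu> t) \<le> (\<integral>x. weight s x \<partial>\<mu> t)"
  using assms integrable_le_weight weight_mono_exponent by (intro integral_mono) auto

lemma weight_moment_bounded:
  assumes "1 \<le> R" and integrable: "\<And>t. 0 \<le> t \<Longrightarrow> integrable (\<mu> t) (weight R)"
  shows "\<exists>M. \<forall>t\<ge>0. (\<integral>x. weight R x \<partial>\<mu> t) \<le> M"
proof -
  define bounded where "bounded r \<longleftrightarrow> (\<exists>M. \<forall>t\<ge>0. (\<integral>x. weight r x \<partial>\<mu> t) \<le> M)" for r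
  have integrable_r: "integrable (\<mu> t) (weight r)" if "r \<le> R" "0 \<le> t" for r t
    using integrable_le_weight[OF integrable] that by blast
  have "bounded 1"
    unfolding bounded_def
  proof (rule weight_moment_bounded_step)
    show "(\<integral>x. weight (1 - 1) x \<partial>\<mu> t) \<le> 1" if "0 \<le> t" for t
      using prob_space.prob_space[OF prob_space[OF that]] by simp
  qed (use assms integrable_r in auto)
  then have bounded_le_1: "bounded r" if "r \<le> 1" for r
    using weight_moment_le[OF that] integrable_r assms(1) unfolding bounded_def
    by (meson order_trans)
  have "\<forall>r. r \<le> R \<longrightarrow> r \<le> 1 + real k \<longrightarrow> bounded r" for k
  proof (induction k)
    case (Suc k)
    show ?case
    proof (intro allI impI)
      fix r assume r: "r \<le> R" "r \<le> 1 + real (Suc k)"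
      show "bounded r"
      proof (cases "r \<le> 1")
        case False
        then have "bounded (r - 1)"
          using Suc.IH r by simp
        then show ?thesis
          unfolding bounded_def using False r integrable_r by (auto intro: weight_moment_bounded_step)
      qed (rule bounded_le_1)
    qed
  qed (use bounded_le_1 in simp)
  moreover obtain k :: nat where "R \<le> real k"
    using real_arch_simple by blast
  then have "R \<le> 1 + real k" by simp
  ultimately show ?thesis
    unfolding bounded_def by blast
qed

lemma integrable_weight_of_moment:
  assumes "integrable (\<mu> t) (\<lambda>x. \<bar>x\<bar> ^ N)" and "0 \<le> r" and "2 * r \<le> real N" and "0 \<le> t"
  shows "integrable (\<mu> t) (weight r)"
proof -
  interpret prob_space "\<mu> t" using prob_space assms(4) .
  show ?thesis
  proof (rule Bochner_Integration.integrable_bound)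
    show "integrable (\<mu> t) (\<lambda>x. 2 powr r * (1 + \<bar>x\<bar> ^ N))"
      using assms(1) by simp
    show "weight r \<in> borel_measurable (\<mu> t)"
      by (rule borel_measurable_continuous[OF smooth_continuous_on[OF smooth_weight] assms(4)])
    show "AE x in \<mu> t. norm (weight r x) \<le> norm (2 powr r * (1 + \<bar>x\<bar> ^ N))"
      using weight_le_abs_power[OF assms(2,3)] weight_pos by (intro AE_I2) (simp add: less_imp_le)
  qed
qed

lemma moment_le_weight_moment:
  assumes "integrable (\<mu> t) (weight (real p / 2))" and "0 \<le> t"
  shows "(\<integral>x. \<bar>x\<bar> ^ p \<partial>\<mu> t) \<le> (\<integral>x. weight (real p / 2) x \<partial>\<mu> t)"
proof (rule integral_mono[OF _ assms(1) abs_power_le_weight])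
  show "integrable (\<mu> t) (\<lambda>x. \<bar>x\<bar> ^ p)"
    using abs_power_le_weight weight_pos
    by (intro Bochner_Integration.integrable_bound[OF assms(1)] borel_measurable_continuous[OF _ assms(2)] AE_I2)
       (auto intro!: continuous_intros simp: abs_of_pos)
qed

end

theorem proposition2:
  fixes n :: nat and a :: "nat \<Rightarrow> real" and \<mu> :: "real \<Rightarrow> real measure" and p :: nat
  assumes n: "n \<ge> 1"
    and prob: "\<And>t. t \<ge> 0 \<Longrightarrow> prob_space (\<mu> t)"
    and borel: "\<And>t. t \<ge> 0 \<Longrightarrow> sets (\<mu> t) = sets borel"
    and eq: "\<And>f t. smooth_compact f \<Longrightarrow> t \<ge> 0 \<Longrightarrow>
       ((\<lambda>s. \<integral>x. f x \<partial>\<mu> s) has_real_derivative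
          (1/2 * (\<integral>z. dq_kernel f (fst z) (snd z) \<partial>(\<mu> t \<Otimes>\<^sub>M \<mu> t))
           - (\<integral>x. deriv (V n a) x * deriv f x \<partial>\<mu> t))) (at t within {0..})"
    and p: "p \<ge> 2"
    and moments: "\<And>t. t \<ge> 0 \<Longrightarrow> integrable (\<mu> t) (\<lambda>x. \<bar>x\<bar> ^ (2*n + p - 2))"
  shows "\<exists>M>0. \<forall>t\<ge>0. (\<integral>x. \<bar>x\<bar> ^ p \<partial>\<mu> t) \<le> M"
proof -
  interpret weak_solution n a \<mu>
    using n prob borel eq by (rule weak_solution.intro)
  have integrable: "integrable (\<mu> t) (weight (real p / 2))" if "0 \<le> t" for t
    using moments[OF that] n that by (intro integrable_weight_of_moment) auto
  obtain M where "\<forall>t\<ge>0. (\<integral>x. weight (real p / 2) x \<partial>\<mu> t) \<le> M"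
    using weight_moment_bounded[of "real p / 2"] integrable p by auto
  then have "\<forall>t\<ge>0. (\<integral>x. \<bar>x\<bar> ^ p \<partial>\<mu> t) \<le> max M 1"
    using moment_le_weight_moment integrable by (meson max.coboundedI1 order_trans)
  then show ?thesis
    by (intro exI[of _ "max M 1"]) auto
qed

end
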